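(* Let $X,U$ be Banach spaces and $\mathcal{U}=PC(\mathbb{R}_+,U)$. Let $\{A(t)\}_{t\ge0}$ generate a strongly continuous evolution family $\{W(t,s)\}_{t\ge s\ge0}$. Let $B\in C(\mathbb{R}_+,L(U,X))$ with $\|B\|_\infty=\sup_t\|B(t)\|<\infty$. Let $\psi:\mathbb{R}_+\times X\times U\to X$, and consider $$\dot x=A(t)x+B(t)u+\psi(t,x,u),\quad x(t_0)=x_0. \tag{N}$$ Assume that $\Psi(t,x,u)=B(t)u+\psi(t,x,u)$ satisfies $(\mathcal{H}_1)$ and that $\psi$ satisfies $(\mathcal{H}_2)$. If the linear system $\dot x=A(t)x+B(t)u$ is 0-UGAS, then $$V(t,x)=\int_t^\infty\|W(\tau,t)x\|_X^2\,d\tau$$ is a non-coercive LISS Lyapunov function in implication form for (N).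
   Context: A strongly continuous evolution family generated by $\{A(t)\}$ satisfies: - $W(s,s)=I$ and $W(t,s)=W(t,r)W(r,s)$; - $(t,s)\mapsto W(t,s)x$ is continuous; - for $v\in D(A(s))$: $\partial_tW(t,s)v=A(t)W(t,s)v$ and $\partial_sW(t,s)v=-W(t,s)A(s)v$. $PC(\mathbb{R}_+,U)$ consists of bounded, right-continuous, piecewise continuous functions, with the sup norm $\|\cdot\|_{\mathcal{U}}$. $(\mathcal{H}_1)$: $\Psi$ is jointly continuous in $(t,u)$ and, for each $c,\tilde t\ge0$, Lipschitz in $x$ uniformly over $t\in[0,\tilde t]$ and $\|x\|,\|u\|\le c$. Under $(\mathcal{H}_1)$, (N) has unique maximal mild solutions $\phi(t,t_0,x_0,u)=W(t,t_0)x_0+\int_{t_0}^tW(t,s)\Psi(s,\phi(s),u(s))ds$. $(\mathcal{H}_2)$: for each $a>0$ there exist $b>0$ and $\rho>0$ such that $\|\psi(t,x,v)\|_X\le a\|x\|_X+b\|v\|_U$ for all $t\ge0$, $x\in X$ and $v\in U$ with $\|x\|_X,\|v\|_U\le\rho$. 0-UGAS of the linear system: there is $\beta\in\mathcal{KL}$ with $\|W(t,t_0)x_0\|\le\beta(\|x_0\|,t-t_0)$. Lie derivative: $\dot V_u(t,x)=\limsup_{h\to0^+}\frac1h(V(t+h,\phi(t+h,t,x,u))-V(t,x))$. Non-coercive LISS Lyapunov function in implication form. A continuous $V:\mathbb{R}_+\times D\to\mathbb{R}_+$ ($D\ni0$ open) with $V(t,0)=0$, for which there exist $\alpha_2\in\mathcal{K}_\infty$,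 $\kappa\in\mathcal{K}$, positive definite $\mu$ and $r_1,r_2>0$ with $\{\|x\|\le r_1\}\subset D$, such that: - $0<V(t,x)\le\alpha_2(\|x\|_X)$ for $x\in D\setminus\{0\}$ and $t\ge0$; - for all $t\ge0$, $\|x\|_X\le r_1$ and $u\in\mathcal{U}$ with $\|u\|_{\mathcal{U}}\le r_2$: $\|x\|_X\ge\kappa(\|u\|_{\mathcal{U}})$ implies $\dot V_u(t,x)\le-\mu(V(t,x))$. *)

theory Defs
  imports "HOL-Analysis.Analysis" "HOL-Library.Liminf_Limsup"
begin

definition classK :: "(real \<Rightarrow> real) \<Rightarrow> bool" where
  "classK \<gamma> \<longleftrightarrow> continuous_on {0..} \<gamma> \<and> \<gamma> 0 = 0 \<and> strict_mono_on {0..} \<gamma>"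

definition classKinf :: "(real \<Rightarrow> real) \<Rightarrow> bool" where
  "classKinf \<gamma> \<longleftrightarrow> classK \<gamma> \<and> filterlim \<gamma> at_top at_top"

definition classKL :: "(real \<Rightarrow> real \<Rightarrow> real) \<Rightarrow> bool" where
  "classKL \<beta> \<longleftrightarrow> continuous_on ({0..} \<times> {0..}) (\<lambda>(r,t). \<beta> r t)
     \<and> (\<forall>t\<ge>0. classK (\<lambda>r. \<beta> r t))
     \<and> (\<forall>r\<ge>0. antimono_on {0..} (\<beta> r) \<and> (\<beta> r \<longlongrightarrow> 0) at_top)"

definition posdef :: "(real \<Rightarrow> real) \<Rightarrow> bool" where
  "posdef \<mu> \<longleftrightarrow> continuous_on {0..} \<mu> \<and> \<mu> 0 = 0 \<and> (\<forall>s>0. \<mu> s > 0)"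

definition evolution_family ::
  "(real \<Rightarrow> 'x::banach \<Rightarrow> 'x) \<Rightarrow> (real \<Rightarrow> 'x set) \<Rightarrow> (real \<Rightarrow> real \<Rightarrow> 'x \<Rightarrow>\<^sub>L 'x) \<Rightarrow> bool" where
  "evolution_family A DA W \<longleftrightarrow>
     (\<forall>s\<ge>0. W s s = id_blinfun)
   \<and> (\<forall>s r t. 0 \<le> s \<and> s \<le> r \<and> r \<le> t \<longrightarrow> W t s = W t r o\<^sub>L W r s)
   \<and> (\<forall>x. continuous_on {(t,s). 0 \<le> s \<and> s \<le> t} (\<lambda>(t,s). blinfun_apply (W t s) x))
   \<and> (\<forall>s t v. 0 \<le> s \<and> s \<le> t \<and> v \<in> DA s \<longrightarrow>
         blinfun_apply (W t s) v \<in> DA t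
       \<and> ((\<lambda>t'. blinfun_apply (W t' s) v) has_vector_derivative
             A t (blinfun_apply (W t s) v)) (at t within {s..})
       \<and> ((\<lambda>s'. blinfun_apply (W t s') v) has_vector_derivative
             - blinfun_apply (W t s) (A s v)) (at s within {0..t}))"

definition pc_input :: "(real \<Rightarrow> 'u::real_normed_vector) \<Rightarrow> bool" where
  "pc_input u \<longleftrightarrow> bounded (u ` {0..})
     \<and> (\<forall>t\<ge>0. continuous (at_right t) u)
     \<and> (\<forall>t>0. \<exists>l. (u \<longlongrightarrow> l) (at_left t))
     \<and> (\<forall>T. finite {t. 0 < t \<and> t \<le> T \<and> \<not> isCont u t})"

definition input_norm :: "(real \<Rightarrow> 'u::real_normed_vector) \<Rightarrow> real" where
  "input_norm u = (SUP t\<in>{0..}. norm (u t))"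

definition H1 :: "(real \<Rightarrow> 'x::real_normed_vector \<Rightarrow> 'u::real_normed_vector \<Rightarrow> 'x) \<Rightarrow> bool" where
  "H1 \<Psi> \<longleftrightarrow> (\<forall>x. continuous_on ({0..} \<times> UNIV) (\<lambda>(t,v). \<Psi> t x v))
     \<and> (\<forall>c\<ge>0. \<forall>T\<ge>0. \<exists>L>0. \<forall>t x y v. 0 \<le> t \<and> t \<le> T \<and> norm x \<le> c \<and> norm y \<le> c \<and> norm v \<le> c
          \<longrightarrow> norm (\<Psi> t x v - \<Psi> t y v) \<le> L * norm (x - y))"

definition H2 :: "(real \<Rightarrow> 'x::real_normed_vector \<Rightarrow> 'u::real_normed_vector \<Rightarrow> 'x) \<Rightarrow> bool" where
  "H2 \<psi> \<longleftrightarrow> (\<forall>a>0. \<exists>b>0. \<exists>\<rho>>0. \<forall>t x v. t \<ge> 0 \<and> norm x \<le> \<rho> \<and> norm v \<le> \<rho>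
          \<longrightarrow> norm (\<psi> t x v) \<le> a * norm x + b * norm v)"

definition zero_UGAS :: "(real \<Rightarrow> real \<Rightarrow> 'x::real_normed_vector \<Rightarrow>\<^sub>L 'x) \<Rightarrow> bool" where
  "zero_UGAS W \<longleftrightarrow> (\<exists>\<beta>. classKL \<beta> \<and>
     (\<forall>t0 t x0. 0 \<le> t0 \<and> t0 \<le> t \<longrightarrow> norm (blinfun_apply (W t t0) x0) \<le> \<beta> (norm x0) (t - t0)))"

definition mild_sol ::
  "(real \<Rightarrow> real \<Rightarrow> 'x::banach \<Rightarrow>\<^sub>L 'x) \<Rightarrow> (real \<Rightarrow> 'x \<Rightarrow> 'u \<Rightarrow> 'x) \<Rightarrow> (real \<Rightarrow> 'u)
     \<Rightarrow> real \<Rightarrow> 'x \<Rightarrow> real \<Rightarrow> (real \<Rightarrow> 'x) \<Rightarrow> bool" where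
  "mild_sol W \<Psi> u t0 x0 d y \<longleftrightarrow> d > 0 \<and> continuous_on {t0..t0+d} y \<and>
     (\<forall>t\<in>{t0..t0+d}.
        (\<lambda>s. blinfun_apply (W t s) (\<Psi> s (y s) (u s))) integrable_on {t0..t}
      \<and> y t = blinfun_apply (W t t0) x0 + integral {t0..t} (\<lambda>s. blinfun_apply (W t s) (\<Psi> s (y s) (u s))))"

definition lie_deriv_le ::
  "(real \<Rightarrow> real \<Rightarrow> 'x::banach \<Rightarrow>\<^sub>L 'x) \<Rightarrow> (real \<Rightarrow> 'x \<Rightarrow> 'u \<Rightarrow> 'x) \<Rightarrow> (real \<Rightarrow> 'x \<Rightarrow> real)
     \<Rightarrow> (real \<Rightarrow> 'u) \<Rightarrow> real \<Rightarrow> 'x \<Rightarrow> real \<Rightarrow> bool" where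
  "lie_deriv_le W \<Psi> V u t x c \<longleftrightarrow>
     (\<forall>d y. mild_sol W \<Psi> u t x d y \<longrightarrow>
        Limsup (at_right 0) (\<lambda>h. ereal ((V (t + h) (y (t + h)) - V t x) / h)) \<le> ereal c)"

definition ncLISS_Lyapunov_impl ::
  "(real \<Rightarrow> real \<Rightarrow> 'x::banach \<Rightarrow>\<^sub>L 'x) \<Rightarrow> (real \<Rightarrow> 'x \<Rightarrow> 'u::banach \<Rightarrow> 'x) \<Rightarrow> (real \<Rightarrow> 'x \<Rightarrow> real) \<Rightarrow> bool" where
  "ncLISS_Lyapunov_impl W \<Psi> V \<longleftrightarrow>
    (\<exists>D \<alpha>2 \<kappa> \<mu> r1 r2.
       open D \<and> 0 \<in> D \<and>
       continuous_on ({0..} \<times> D) (\<lambda>(t,x). V t x) \<and>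
       (\<forall>t\<ge>0. \<forall>x\<in>D. V t x \<ge> 0) \<and>
       (\<forall>t\<ge>0. V t 0 = 0) \<and>
       classKinf \<alpha>2 \<and> classK \<kappa> \<and> posdef \<mu> \<and> r1 > 0 \<and> r2 > 0 \<and> cball 0 r1 \<subseteq> D \<and>
       (\<forall>t\<ge>0. \<forall>x\<in>D - {0}. 0 < V t x \<and> V t x \<le> \<alpha>2 (norm x)) \<and>
       (\<forall>t\<ge>0. \<forall>x u. norm x \<le> r1 \<and> pc_input u \<and> input_norm u \<le> r2 \<and> norm x \<ge> \<kappa> (input_norm u)
           \<longrightarrow> lie_deriv_le W \<Psi> V u t x (- \<mu> (V t x))))"

end

(*
  For a linear evolution family, 0-UGAS is uniform exponential stability: once the KL bound
  satisfies beta(1, T) <= 1/2, the cocycle law W(t, s) = W(t, r) W(r, s) halves the norm on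
  every time step of length T, so ||W(tau, s)|| <= M exp(-omega (tau - s)). Hence
  V(t, x) = int_t^oo ||W(tau, t) x||^2 is finite, continuous, at most M^2/(2 omega) ||x||^2,
  and positive for x ~= 0 because W(t, t) = I.

  Along a mild solution y from (t, x), y(t + h) differs from W(t + h, t) x by an integral of
  size O(h), and W(tau, t + h) W(t + h, t) = W(tau, t). Therefore
    V(t + h, y(t + h)) - V(t, x) <= - int_t^(t+h) ||W(tau, t) x||^2 + h (M^2/omega) ||x|| K + O(h^2),
  where K bounds Psi along y near t, so the Dini derivative is at most
  -||x||^2 + (M^2/omega) ||x|| (a ||x|| + b ||u||). Taking a = omega/(4 M^2) in (H2) and kappa
  linear with slope above 4 (M^2/omega) b, this is <= -||x||^2/2 <= -(omega/M^2) V whenever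
  ||x|| >= kappa(||u||).
*)

theory Submission
  imports Defs
begin

section \<open>Exponential stability from 0-UGAS\<close>

definition exp_stable :: "(real \<Rightarrow> real \<Rightarrow> 'x::real_normed_vector \<Rightarrow>\<^sub>L 'x) \<Rightarrow> real \<Rightarrow> real \<Rightarrow> bool" where
  "exp_stable W M \<omega> \<longleftrightarrow> (\<forall>s \<tau> v. 0 \<le> s \<and> s \<le> \<tau> \<longrightarrow>
     norm (blinfun_apply (W \<tau> s) v) \<le> M * exp (- \<omega> * (\<tau> - s)) * norm v)"

lemma exp_stableD:
  "exp_stable W M \<omega> \<Longrightarrow> 0 \<le> s \<Longrightarrow> s \<le> \<tau> \<Longrightarrow>
     norm (blinfun_apply (W \<tau> s) v) \<le> M * exp (- \<omega> * (\<tau> - s)) * norm v"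
  by (simp add: exp_stable_def)

lemma evolution_family_id:
  "evolution_family A DA W \<Longrightarrow> 0 \<le> s \<Longrightarrow> blinfun_apply (W s s) v = v"
  by (simp add: evolution_family_def)

lemma evolution_family_comp:
  "evolution_family A DA W \<Longrightarrow> 0 \<le> s \<Longrightarrow> s \<le> r \<Longrightarrow> r \<le> \<tau> \<Longrightarrow>
     blinfun_apply (W \<tau> r) (blinfun_apply (W r s) v) = blinfun_apply (W \<tau> s) v"
  by (simp add: evolution_family_def)

lemma evolution_family_continuous_on:
  assumes "evolution_family A DA W" and "0 \<le> s"
  shows "continuous_on {s..} (\<lambda>\<tau>. blinfun_apply (W \<tau> s) v)"
proof -
  have "continuous_on {(t, s). 0 \<le> s \<and> s \<le> t} (\<lambda>(t, s). blinfun_apply (W t s) v)"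
    using assms(1) unfolding evolution_family_def by blast
  then have "continuous_on {s..} (\<lambda>\<tau>. (\<lambda>(t, s). blinfun_apply (W t s) v) (\<tau>, s))"
    by (rule continuous_on_compose2) (use assms(2) in \<open>auto intro!: continuous_intros\<close>)
  then show ?thesis by simp
qed

lemma norm_blinfun_apply_le_of_unit:
  fixes L :: "'a::real_normed_vector \<Rightarrow>\<^sub>L 'b::real_normed_vector"
  assumes "\<And>x. norm x = 1 \<Longrightarrow> norm (blinfun_apply L x) \<le> c"
  shows "norm (blinfun_apply L v) \<le> c * norm v"
proof (cases "v = 0")
  case False
  have "norm (blinfun_apply L v) = norm v * norm (blinfun_apply L (v /\<^sub>R norm v))"
    using False by (simp add: blinfun.scaleR_right)
  also have "\<dots> \<le> norm v * c"
    using False by (intro mult_left_mono assms) auto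
  finally show ?thesis by (simp add: mult.commute)
qed simp

lemma evolution_family_halving_iterate:
  assumes EF: "evolution_family A DA W" and "T > 0" and "M0 \<ge> 0"
    and bound: "\<And>s \<tau> v. 0 \<le> s \<Longrightarrow> s \<le> \<tau> \<Longrightarrow> norm (blinfun_apply (W \<tau> s) v) \<le> M0 * norm v"
    and half: "\<And>s v. 0 \<le> s \<Longrightarrow> norm (blinfun_apply (W (s + T) s) v) \<le> norm v / 2"
    and "0 \<le> s" and "s + real n * T \<le> \<tau>"
  shows "norm (blinfun_apply (W \<tau> s) v) \<le> M0 * (1/2) ^ n * norm v"
  using assms(6,7)
proof (induction n arbitrary: s v)
  case 0
  then show ?case using bound by simp
next
  case (Suc n)
  have "0 \<le> real n * T"
    using \<open>T > 0\<close> by simp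
  then have "s + T \<le> \<tau>"
    using Suc.prems(2) by (simp add: algebra_simps)
  then have "norm (blinfun_apply (W \<tau> s) v)
      = norm (blinfun_apply (W \<tau> (s + T)) (blinfun_apply (W (s + T) s) v))"
    using evolution_family_comp[OF EF] Suc.prems \<open>T > 0\<close> by simp
  also have "\<dots> \<le> M0 * (1/2) ^ n * norm (blinfun_apply (W (s + T) s) v)"
    using Suc.prems \<open>T > 0\<close> by (intro Suc.IH) (auto simp: algebra_simps)
  also have "\<dots> \<le> M0 * (1/2) ^ n * (norm v / 2)"
    using half Suc.prems \<open>M0 \<ge> 0\<close> by (intro mult_left_mono) auto
  finally show ?case by simp
qed

lemma half_power_floor_le_exp:
  assumes "T > 0" and "0 \<le> r"
  shows "(1/2::real) ^ nat \<lfloor>r / T\<rfloor> \<le> 2 * exp (- (ln 2 / T) * r)"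
proof -
  define n where "n = nat \<lfloor>r / T\<rfloor>"
  have "r / T < real n + 1"
    using assms by (simp add: n_def)
  then have "r \<le> T * (real n + 1)"
    using assms by (simp add: divide_less_eq algebra_simps)
  then have "r * ln 2 \<le> T * (real n + 1) * ln 2"
    by (rule mult_right_mono) simp
  then have "- ln 2 * (real n + 1) \<le> - (ln 2 / T) * r"
    using assms by (simp add: field_simps)
  moreover have "(1/2::real) ^ n = 2 * exp (- ln 2 * (real n + 1))"
  proof -
    have "exp (ln 2 * real n) = (2::real) ^ n"
      by (metis exp_ln exp_of_nat_mult mult.commute zero_less_numeral)
    then show ?thesis
      by (simp add: exp_minus exp_of_nat_mult[symmetric] distrib_left power_divide exp_add[symmetric]
          exp_diff inverse_eq_divide)
  qed
  ultimately show ?thesis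
    unfolding n_def[symmetric] by simp
qed

lemma zero_UGAS_imp_exp_stable:
  assumes EF: "evolution_family A DA W" and "zero_UGAS W"
  obtains M \<omega> where "M \<ge> 1" and "\<omega> > 0" and "exp_stable W M \<omega>"
proof -
  obtain \<beta> where KL: "classKL \<beta>"
    and \<beta>: "\<And>t0 t x0. 0 \<le> t0 \<Longrightarrow> t0 \<le> t \<Longrightarrow> norm (blinfun_apply (W t t0) x0) \<le> \<beta> (norm x0) (t - t0)"
    using assms(2) unfolding zero_UGAS_def by blast
  have W_le: "norm (blinfun_apply (W \<tau> s) v) \<le> \<beta> 1 (\<tau> - s) * norm v" if "0 \<le> s" "s \<le> \<tau>" for s \<tau> v
    using \<beta>[OF that] by (intro norm_blinfun_apply_le_of_unit) metis
  have anti: "antimono_on {0..} (\<beta> 1)" and lim: "(\<beta> 1 \<longlongrightarrow> 0) at_top"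
    using KL unfolding classKL_def by auto
  obtain T0 where T0: "\<And>r. r \<ge> T0 \<Longrightarrow> \<beta> 1 r < 1/2"
    using order_tendstoD(2)[OF lim, of "1/2"] by (auto simp: eventually_at_top_linorder)
  define T where "T = max T0 1"
  have T: "T > 0" "\<beta> 1 T \<le> 1/2"
    using T0[of T] by (auto simp: T_def)
  define M0 where "M0 = max 1 (\<beta> 1 0)"
  have \<beta>_le: "\<beta> 1 r \<le> M0" if "r \<ge> 0" for r
    using anti that unfolding monotone_on_def M0_def by (metis atLeast_iff max.coboundedI2 order_refl)
  have bound: "norm (blinfun_apply (W \<tau> s) v) \<le> M0 * norm v" if "0 \<le> s" "s \<le> \<tau>" for s \<tau> v
    using order_trans[OF W_le[OF that] mult_right_mono[OF \<beta>_le norm_ge_zero]] that by simp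
  have half: "norm (blinfun_apply (W (s + T) s) v) \<le> norm v / 2" if "0 \<le> s" for s v
    using W_le[of s "s + T" v] mult_right_mono[OF T(2) norm_ge_zero[of v]] T that by simp
  have "exp_stable W (2 * M0) (ln 2 / T)"
    unfolding exp_stable_def
  proof (intro allI impI)
    fix s \<tau> :: real and v assume s: "0 \<le> s \<and> s \<le> \<tau>"
    define n where "n = nat \<lfloor>(\<tau> - s) / T\<rfloor>"
    have "real n \<le> (\<tau> - s) / T"
      using s T by (simp add: n_def)
    then have "s + real n * T \<le> \<tau>"
      using T by (simp add: pos_le_divide_eq)
    then have "norm (blinfun_apply (W \<tau> s) v) \<le> M0 * (1/2) ^ n * norm v"
      using s T by (intro evolution_family_halving_iterate[OF EF _ _ bound half]) (auto simp: M0_def)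
    also have "\<dots> \<le> M0 * (2 * exp (- (ln 2 / T) * (\<tau> - s))) * norm v"
      unfolding n_def using s T
      by (intro mult_right_mono mult_left_mono half_power_floor_le_exp) (auto simp: M0_def)
    finally show "norm (blinfun_apply (W \<tau> s) v) \<le> 2 * M0 * exp (- (ln 2 / T) * (\<tau> - s)) * norm v"
      by simp
  qed
  moreover have "2 * M0 \<ge> 1" "ln 2 / T > 0"
    using T by (auto simp: M0_def)
  ultimately show ?thesis using that by blast
qed

section \<open>The Lyapunov integral\<close>

definition lyapunov_integral :: "(real \<Rightarrow> real \<Rightarrow> 'x::real_normed_vector \<Rightarrow>\<^sub>L 'x) \<Rightarrow> real \<Rightarrow> 'x \<Rightarrow> real" where
  "lyapunov_integral W t x = integral {t..} (\<lambda>\<tau>. (norm (blinfun_apply (W \<tau> t) x))\<^sup>2)"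

lemma has_integral_exp_decay:
  fixes a c c0 :: real
  assumes "a > 0"
  shows "((\<lambda>\<tau>. exp (- a * (\<tau> - c0))) has_integral exp (- a * (c - c0)) / a) {c..}"
proof -
  have "((\<lambda>\<tau>. exp (a * c0) * exp (- a * \<tau>)) has_integral exp (a * c0) * (exp (- a * c) / a)) {c..}"
    using has_integral_exp_minus_to_infinity[OF assms, of c] by (rule has_integral_mult_right)
  moreover have "exp (a * c0) * exp (- a * \<tau>) = exp (- a * (\<tau> - c0))" for \<tau>
    by (simp add: exp_add[symmetric] algebra_simps)
  moreover have "exp (a * c0) * (exp (- a * c) / a) = exp (- a * (c - c0)) / a"
    by (simp add: exp_add[symmetric] algebra_simps)
  ultimately show ?thesis
    by simp
qed

lemma exp_stable_square_le:
  assumes "exp_stable W M \<omega>" and "0 \<le> s" and "s \<le> \<tau>"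
  shows "(norm (blinfun_apply (W \<tau> s) v))\<^sup>2 \<le> M\<^sup>2 * (norm v)\<^sup>2 * exp (- (2 * \<omega>) * (\<tau> - s))"
proof -
  have "(norm (blinfun_apply (W \<tau> s) v))\<^sup>2 \<le> (M * exp (- \<omega> * (\<tau> - s)) * norm v)\<^sup>2"
    using exp_stableD[OF assms] by (intro power_mono) auto
  also have "\<dots> = M\<^sup>2 * (norm v)\<^sup>2 * exp (- (2 * \<omega>) * (\<tau> - s))"
    by (simp add: power_mult_distrib power2_eq_square exp_add[symmetric] algebra_simps)
  finally show ?thesis .
qed

lemma exp_stable_square_integrable:
  assumes EF: "evolution_family A DA W" and ES: "exp_stable W M \<omega>" and "\<omega> > 0"
    and "0 \<le> s" and "s \<le> s0"
  shows "(\<lambda>\<tau>. (norm (blinfun_apply (W \<tau> s) v))\<^sup>2) integrable_on {s0..}"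
proof -
  have dom: "(\<lambda>\<tau>. M\<^sup>2 * (norm v)\<^sup>2 * exp (- (2 * \<omega>) * (\<tau> - s))) integrable_on {s0..}"
    using has_integral_exp_decay[of "2 * \<omega>" s s0] \<open>\<omega> > 0\<close>
    by (intro integrable_on_mult_right) (auto simp: integrable_on_def)
  have cont: "continuous_on {s0..} (\<lambda>\<tau>. (norm (blinfun_apply (W \<tau> s) v))\<^sup>2)"
    using \<open>s \<le> s0\<close> by (intro continuous_on_power continuous_on_norm
        continuous_on_subset[OF evolution_family_continuous_on[OF EF \<open>0 \<le> s\<close>]]) auto
  have le: "norm ((norm (blinfun_apply (W \<tau> s) v))\<^sup>2) \<le> M\<^sup>2 * (norm v)\<^sup>2 * exp (- (2 * \<omega>) * (\<tau> - s))"
    if "\<tau> \<in> {s0..}" for \<tau>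
    using exp_stable_square_le[OF ES \<open>0 \<le> s\<close>, of \<tau> v] that \<open>s \<le> s0\<close> by simp
  show ?thesis
    by (rule measurable_bounded_by_integrable_imp_integrable
        [OF continuous_imp_measurable_on_sets_lebesgue[OF cont] dom le]) auto
qed

lemma lyapunov_integral_le:
  assumes EF: "evolution_family A DA W" and ES: "exp_stable W M \<omega>" and "\<omega> > 0" and "0 \<le> s"
  shows "lyapunov_integral W s v \<le> M\<^sup>2 / (2 * \<omega>) * (norm v)\<^sup>2"
proof -
  let ?g = "\<lambda>\<tau>. M\<^sup>2 * (norm v)\<^sup>2 * exp (- (2 * \<omega>) * (\<tau> - s))"
  have g: "(?g has_integral M\<^sup>2 / (2 * \<omega>) * (norm v)\<^sup>2) {s..}"
    using has_integral_mult_right[OF has_integral_exp_decay[of "2 * \<omega>" s s], of "M\<^sup>2 * (norm v)\<^sup>2"] \<open>\<omega> > 0\<close>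
    by simp
  have "lyapunov_integral W s v \<le> integral {s..} ?g"
    unfolding lyapunov_integral_def
    using exp_stable_square_le[OF ES \<open>0 \<le> s\<close>] g
    by (intro integral_le exp_stable_square_integrable[OF EF ES \<open>\<omega> > 0\<close> \<open>0 \<le> s\<close>])
       (auto simp: integrable_on_def)
  then show ?thesis
    using integral_unique[OF g] by simp
qed

lemma integral_initial_segment_ge:
  fixes f :: "real \<Rightarrow> real"
  assumes cont: "continuous_on {s..} f" and "\<eta> > 0"
  obtains h0 where "h0 > 0" and "\<And>h. 0 < h \<Longrightarrow> h \<le> h0 \<Longrightarrow> h * (f s - \<eta>) \<le> integral {s..s + h} f"
proof -
  obtain d where d: "d > 0" "\<And>x. x \<in> {s..} \<Longrightarrow> dist x s < d \<Longrightarrow> dist (f x) (f s) < \<eta>"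
    using cont \<open>\<eta> > 0\<close> unfolding continuous_on_iff by (meson atLeast_iff order_refl)
  have "h * (f s - \<eta>) \<le> integral {s..s + h} f" if h: "0 < h" "h \<le> d / 2" for h
  proof -
    have "integral {s..s + h} (\<lambda>_. f s - \<eta>) \<le> integral {s..s + h} f"
    proof (rule integral_le)
      show "f integrable_on {s..s + h}"
        by (rule integrable_continuous_interval, rule continuous_on_subset[OF cont]) auto
      show "f s - \<eta> \<le> f x" if "x \<in> {s..s + h}" for x
        using d(2)[of x] that h by (auto simp: dist_real_def)
    qed auto
    then show ?thesis using h by simp
  qed
  then show ?thesis using that[of "d / 2"] d(1) by simp
qed

lemma lyapunov_integral_nonneg:
  assumes "evolution_family A DA W" and "exp_stable W M \<omega>" and "\<omega> > 0" and "0 \<le> t"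
  shows "0 \<le> lyapunov_integral W t x"
  unfolding lyapunov_integral_def
  by (rule integral_nonneg[OF exp_stable_square_integrable[OF assms order_refl]]) simp

lemma lyapunov_integral_pos:
  assumes EF: "evolution_family A DA W" and ES: "exp_stable W M \<omega>" and "\<omega> > 0" and t: "0 \<le> t"
    and "x \<noteq> 0"
  shows "0 < lyapunov_integral W t x"
proof -
  let ?f = "\<lambda>\<tau>. (norm (blinfun_apply (W \<tau> t) x))\<^sup>2"
  have cont: "continuous_on {t..} ?f"
    by (intro continuous_on_power continuous_on_norm evolution_family_continuous_on[OF EF t])
  have ft: "?f t = (norm x)\<^sup>2"
    using evolution_family_id[OF EF t] by simp
  have pos: "(norm x)\<^sup>2 / 2 > 0"
    using \<open>x \<noteq> 0\<close> by simp
  obtain h where h: "h > 0" "h * (?f t - (norm x)\<^sup>2 / 2) \<le> integral {t..t + h} ?f"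
    using integral_initial_segment_ge[OF cont pos] by blast
  have "integral {t..t + h} ?f \<le> lyapunov_integral W t x"
    unfolding lyapunov_integral_def
    using integrable_continuous_interval[OF continuous_on_subset[OF cont]]
      exp_stable_square_integrable[OF EF ES \<open>\<omega> > 0\<close> t order_refl]
    by (intro integral_subset_le) auto
  then show ?thesis
    using h ft mult_pos_pos[OF h(1) pos] by simp
qed

lemma evolution_family_tendsto_initial:
  assumes EF: "evolution_family A DA W" and ES: "exp_stable W M \<omega>" and "0 \<le> M" and "0 \<le> \<omega>"
    and t: "t \<longlonglongrightarrow> t0" and x: "x \<longlonglongrightarrow> x0" and t_nonneg: "\<And>k. 0 \<le> t k" and "t0 < \<tau>"
  shows "(\<lambda>k. blinfun_apply (W \<tau> (t k)) (x k)) \<longlonglongrightarrow> blinfun_apply (W \<tau> t0) x0"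
proof -
  have t0: "0 \<le> t0"
    using t_nonneg by (intro LIMSEQ_le_const[OF t]) auto
  have ev: "eventually (\<lambda>k. t k < \<tau>) sequentially"
    using order_tendstoD(2)[OF t \<open>t0 < \<tau>\<close>] .
  have C: "continuous_on {(t, s). 0 \<le> s \<and> s \<le> t} (\<lambda>(t, s). blinfun_apply (W t s) x0)"
    using EF unfolding evolution_family_def by blast
  have "((\<lambda>(t, s). blinfun_apply (W t s) x0) \<circ> (\<lambda>k. (\<tau>, min (t k) \<tau>)))
      \<longlonglongrightarrow> (\<lambda>(t, s). blinfun_apply (W t s) x0) (\<tau>, t0)"
    using t0 t_nonneg \<open>t0 < \<tau>\<close> tendsto_min[OF t tendsto_const[of \<tau>]]
    by (intro C[unfolded continuous_on_sequentially, rule_format]) (auto intro!: tendsto_Pair)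
  then have "(\<lambda>k. blinfun_apply (W \<tau> (min (t k) \<tau>)) x0) \<longlonglongrightarrow> blinfun_apply (W \<tau> t0) x0"
    by (simp add: o_def)
  then have fixed: "(\<lambda>k. blinfun_apply (W \<tau> (t k)) x0) \<longlonglongrightarrow> blinfun_apply (W \<tau> t0) x0"
    by (rule Lim_transform_eventually) (use ev in \<open>auto elim: eventually_mono\<close>)
  have "eventually (\<lambda>k. norm (blinfun_apply (W \<tau> (t k)) (x k - x0)) \<le> M * norm (x k - x0)) sequentially"
    using ev
  proof eventually_elim
    case (elim k)
    have "norm (blinfun_apply (W \<tau> (t k)) (x k - x0)) \<le> M * exp (- \<omega> * (\<tau> - t k)) * norm (x k - x0)"
      using exp_stableD[OF ES t_nonneg] elim by simp
    also have "\<dots> \<le> M * norm (x k - x0)"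
      using elim \<open>0 \<le> M\<close> \<open>0 \<le> \<omega>\<close> by (intro mult_right_mono mult_left_le) auto
    finally show ?case .
  qed
  moreover have "(\<lambda>k. M * norm (x k - x0)) \<longlonglongrightarrow> 0"
    using x by (intro tendsto_mult_right_zero) (simp add: tendsto_norm_zero_iff LIM_zero)
  ultimately have "(\<lambda>k. blinfun_apply (W \<tau> (t k)) (x k - x0)) \<longlonglongrightarrow> 0"
    by (rule Lim_null_comparison)
  from tendsto_add[OF this fixed] show ?thesis
    by (simp add: blinfun.diff_right)
qed

lemma has_integral_restrict_punctured:
  fixes f :: "'n::euclidean_space \<Rightarrow> 'a::banach"
  shows "(f has_integral i) S \<longleftrightarrow> ((\<lambda>x. if x \<in> S then f x else 0) has_integral i) (- {c})"
proof -
  have "negligible {x \<in> UNIV - (- {c}). g x \<noteq> 0}" for g :: "'n \<Rightarrow> 'a"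
    by (rule negligible_subset[of "{c}"]) auto
  then show ?thesis
    unfolding has_integral_restrict_UNIV[where s = S and f = f, symmetric]
    by (intro has_integral_spike_set_eq) auto
qed

definition lyapunov_integrand :: "(real \<Rightarrow> real \<Rightarrow> 'x::real_normed_vector \<Rightarrow>\<^sub>L 'x) \<Rightarrow> real \<Rightarrow> 'x \<Rightarrow> real \<Rightarrow> real" where
  "lyapunov_integrand W s y \<tau> = (if s \<le> \<tau> then (norm (blinfun_apply (W \<tau> s) y))\<^sup>2 else 0)"

lemma has_integral_lyapunov_integrand:
  assumes "evolution_family A DA W" and "exp_stable W M \<omega>" and "\<omega> > 0" and "0 \<le> s"
  shows "(lyapunov_integrand W s y has_integral lyapunov_integral W s y) (- {c})"
proof -
  have "((\<lambda>\<tau>. (norm (blinfun_apply (W \<tau> s) y))\<^sup>2) has_integral lyapunov_integral W s y) {s..}"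
    unfolding lyapunov_integral_def
    using exp_stable_square_integrable[OF assms order_refl] by (rule integrable_integral)
  then have "((\<lambda>\<tau>. if \<tau> \<in> {s..} then (norm (blinfun_apply (W \<tau> s) y))\<^sup>2 else 0)
      has_integral lyapunov_integral W s y) (- {c})"
    by (rule has_integral_restrict_punctured[THEN iffD1])
  then show ?thesis
    by (simp add: lyapunov_integrand_def[abs_def])
qed

lemma lyapunov_integrand_le:
  assumes ES: "exp_stable W M \<omega>" and "0 \<le> M" and "0 \<le> \<omega>" and "0 \<le> s" and "s \<le> T" and "norm y \<le> R"
  shows "norm (lyapunov_integrand W s y \<tau>) \<le> (if 0 \<le> \<tau> then M\<^sup>2 * R\<^sup>2 * exp (- (2 * \<omega>) * (\<tau> - T)) else 0)"
proof (cases "s \<le> \<tau>")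
  case True
  have "(norm (blinfun_apply (W \<tau> s) y))\<^sup>2 \<le> M\<^sup>2 * (norm y)\<^sup>2 * exp (- (2 * \<omega>) * (\<tau> - s))"
    using exp_stable_square_le[OF ES \<open>0 \<le> s\<close> True] .
  also have "\<dots> \<le> M\<^sup>2 * R\<^sup>2 * exp (- (2 * \<omega>) * (\<tau> - T))"
    using assms by (intro mult_mono power_mono) (auto simp: mult_left_mono)
  finally show ?thesis
    using True \<open>0 \<le> s\<close> by (simp add: lyapunov_integrand_def)
qed (simp add: lyapunov_integrand_def)

lemma lyapunov_integrand_tendsto:
  assumes EF: "evolution_family A DA W" and ES: "exp_stable W M \<omega>" and "0 \<le> M" and "0 \<le> \<omega>"
    and t: "t \<longlonglongrightarrow> t0" and x: "x \<longlonglongrightarrow> x0" and t_nonneg: "\<And>k. 0 \<le> t k" and "\<tau> \<noteq> t0"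
  shows "(\<lambda>k. lyapunov_integrand W (t k) (x k) \<tau>) \<longlonglongrightarrow> lyapunov_integrand W t0 x0 \<tau>"
proof (cases "\<tau> < t0")
  case True
  have "eventually (\<lambda>k. lyapunov_integrand W (t k) (x k) \<tau> = 0) sequentially"
    using order_tendstoD(1)[OF t True] by eventually_elim (simp add: lyapunov_integrand_def)
  then show ?thesis
    using True by (simp add: lyapunov_integrand_def tendsto_eventually)
next
  case False
  with \<open>\<tau> \<noteq> t0\<close> have "t0 < \<tau>" by auto
  have "(\<lambda>k. (norm (blinfun_apply (W \<tau> (t k)) (x k)))\<^sup>2) \<longlonglongrightarrow> (norm (blinfun_apply (W \<tau> t0) x0))\<^sup>2"
    using evolution_family_tendsto_initial[OF EF ES \<open>0 \<le> M\<close> \<open>0 \<le> \<omega>\<close> t x t_nonneg \<open>t0 < \<tau>\<close>]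
    by (intro tendsto_power tendsto_norm)
  moreover have "eventually (\<lambda>k. (norm (blinfun_apply (W \<tau> (t k)) (x k)))\<^sup>2
      = lyapunov_integrand W (t k) (x k) \<tau>) sequentially"
    using order_tendstoD(2)[OF t \<open>t0 < \<tau>\<close>] by eventually_elim (simp add: lyapunov_integrand_def)
  ultimately show ?thesis
    using \<open>t0 < \<tau>\<close> by (simp add: lyapunov_integrand_def Lim_transform_eventually)
qed

lemma lyapunov_integral_continuous:
  assumes EF: "evolution_family A DA W" and ES: "exp_stable W M \<omega>" and "0 \<le> M" and "\<omega> > 0"
  shows "continuous_on ({0..} \<times> UNIV) (\<lambda>(t, x). lyapunov_integral W t x)"
proof (rule continuous_on_sequentiallyI)
  fix p a assume p: "\<forall>n. p n \<in> {0::real..} \<times> (UNIV :: 'a set)" and lim: "p \<longlonglongrightarrow> a"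
  obtain t0 x0 where a: "a = (t0, x0)" by (cases a)
  define t where "t n = fst (p n)" for n
  define x where "x n = snd (p n)" for n
  have t: "t \<longlonglongrightarrow> t0" and x: "x \<longlonglongrightarrow> x0"
    using tendsto_fst[OF lim] tendsto_snd[OF lim] unfolding t_def[abs_def] x_def[abs_def]
    by (simp_all add: a)
  have t_nonneg: "0 \<le> t n" for n
    using p by (auto simp: t_def mem_Times_iff)
  have "0 \<le> t0"
    using t_nonneg by (intro LIMSEQ_le_const[OF t]) auto
  obtain T where T: "\<And>n. t n \<le> T"
    using convergent_imp_Bseq[OF convergentI[OF t]] by (auto simp: Bseq_def abs_le_iff)
  obtain R where R: "\<And>n. norm (x n) \<le> R"
    using convergent_imp_Bseq[OF convergentI[OF x]] by (auto simp: Bseq_def)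
  \<comment> \<open>The truncated integrands converge pointwise except at \<open>t0\<close>, so integrate over \<open>- {t0}\<close>.\<close>
  define h where "h \<tau> = (if 0 \<le> \<tau> then M\<^sup>2 * R\<^sup>2 * exp (- (2 * \<omega>) * (\<tau> - T)) else 0)" for \<tau>
  have "((\<lambda>\<tau>. M\<^sup>2 * R\<^sup>2 * exp (- (2 * \<omega>) * (\<tau> - T))) has_integral
      M\<^sup>2 * R\<^sup>2 * (exp (- (2 * \<omega>) * (0 - T)) / (2 * \<omega>))) {0..}"
    using \<open>\<omega> > 0\<close> by (intro has_integral_mult_right has_integral_exp_decay) simp
  from has_integral_restrict_punctured[THEN iffD1, OF this, of t0]
  have h: "h integrable_on - {t0}"
    unfolding h_def integrable_on_def by auto
  have "(\<lambda>k. integral (- {t0}) (lyapunov_integrand W (t k) (x k)))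
      \<longlonglongrightarrow> integral (- {t0}) (lyapunov_integrand W t0 x0)"
  proof (rule dominated_convergence(2)[OF _ h])
    show "lyapunov_integrand W (t k) (x k) integrable_on - {t0}" for k
      using has_integral_lyapunov_integrand[OF EF ES \<open>\<omega> > 0\<close> t_nonneg] by (rule has_integral_integrable)
    show "norm (lyapunov_integrand W (t k) (x k) \<tau>) \<le> h \<tau>" for k \<tau>
      unfolding h_def using \<open>\<omega> > 0\<close> by (intro lyapunov_integrand_le[OF ES \<open>0 \<le> M\<close> _ t_nonneg T R]) simp
    show "(\<lambda>k. lyapunov_integrand W (t k) (x k) \<tau>) \<longlonglongrightarrow> lyapunov_integrand W t0 x0 \<tau>" if "\<tau> \<in> - {t0}" for \<tau>
      using \<open>\<omega> > 0\<close> that by (intro lyapunov_integrand_tendsto[OF EF ES \<open>0 \<le> M\<close> _ t x t_nonneg]) auto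
  qed
  then show "(\<lambda>n. (\<lambda>(t, x). lyapunov_integral W t x) (p n)) \<longlonglongrightarrow> (\<lambda>(t, x). lyapunov_integral W t x) a"
    using integral_unique[OF has_integral_lyapunov_integrand[OF EF ES \<open>\<omega> > 0\<close> t_nonneg]]
      integral_unique[OF has_integral_lyapunov_integrand[OF EF ES \<open>\<omega> > 0\<close> \<open>0 \<le> t0\<close>]]
    by (simp add: a t_def x_def case_prod_beta)
qed

section \<open>Decrease along mild solutions\<close>

lemma mild_sol_initial:
  assumes "evolution_family A DA W" and "0 \<le> t" and "mild_sol W \<Psi> u t x d y"
  shows "y t = x"
proof -
  have "t \<in> {t..t + d}"
    using assms(3) by (simp add: mild_sol_def)
  then show ?thesis
    using assms evolution_family_id[OF assms(1,2)] by (simp add: mild_sol_def)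
qed

lemma mild_sol_deviation_le:
  assumes EF: "evolution_family A DA W" and ES: "exp_stable W M \<omega>" and "0 \<le> M" and "0 \<le> \<omega>"
    and t: "0 \<le> t" and ms: "mild_sol W \<Psi> u t x d y" and h: "0 < h" "h \<le> d"
    and K: "\<And>s. s \<in> {t..t + h} \<Longrightarrow> norm (\<Psi> s (y s) (u s)) \<le> K" and "t + h \<le> \<tau>"
  shows "norm (blinfun_apply (W \<tau> (t + h)) (y (t + h)) - blinfun_apply (W \<tau> t) x)
           \<le> h * M * exp (- \<omega> * (\<tau> - (t + h))) * K"
proof -
  define F where "F s = \<Psi> s (y s) (u s)" for s
  define I where "I = integral {t..t + h} (\<lambda>s. blinfun_apply (W (t + h) s) (F s))"
  have "t + h \<in> {t..t + d}"
    using h by auto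
  then have I_int: "(\<lambda>s. blinfun_apply (W (t + h) s) (F s)) integrable_on {t..t + h}"
    and y: "y (t + h) = blinfun_apply (W (t + h) t) x + I"
    using ms unfolding mild_sol_def F_def I_def by blast+
  have diff: "blinfun_apply (W \<tau> (t + h)) (y (t + h)) - blinfun_apply (W \<tau> t) x = blinfun_apply (W \<tau> (t + h)) I"
    unfolding y using evolution_family_comp[OF EF t, of "t + h" \<tau> x] h \<open>t + h \<le> \<tau>\<close>
    by (simp add: blinfun.add_right)
  have int: "((\<lambda>s. blinfun_apply (W \<tau> s) (F s)) has_integral blinfun_apply (W \<tau> (t + h)) I) {t..t + h}"
  proof (rule has_integral_eq[OF _ has_integral_linear[OF integrable_integral[OF I_int]
          blinfun.bounded_linear_right, folded I_def]])
    show "(blinfun_apply (W \<tau> (t + h)) \<circ> (\<lambda>s. blinfun_apply (W (t + h) s) (F s))) s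
        = blinfun_apply (W \<tau> s) (F s)" if "s \<in> {t..t + h}" for s
      using evolution_family_comp[OF EF, of s "t + h" \<tau>] that t \<open>t + h \<le> \<tau>\<close> by simp
  qed
  have bound: "norm (blinfun_apply (W \<tau> s) (F s)) \<le> M * exp (- \<omega> * (\<tau> - (t + h))) * K"
    if "s \<in> {t..t + h}" for s
  proof -
    have "norm (blinfun_apply (W \<tau> s) (F s)) \<le> M * exp (- \<omega> * (\<tau> - s)) * norm (F s)"
      using exp_stableD[OF ES] that t \<open>t + h \<le> \<tau>\<close> by simp
    also have "\<dots> \<le> M * exp (- \<omega> * (\<tau> - (t + h))) * K"
      using that K[OF that] \<open>0 \<le> M\<close> \<open>0 \<le> \<omega>\<close>
      by (intro mult_mono) (auto simp: F_def mult_left_mono)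
    finally show ?thesis .
  qed
  have "norm (\<Psi> t (y t) (u t)) \<le> K"
    using K h by simp
  then have "0 \<le> K"
    by (rule order_trans[OF norm_ge_zero])
  then have "norm (blinfun_apply (W \<tau> (t + h)) I) \<le> M * exp (- \<omega> * (\<tau> - (t + h))) * K * measure lborel {t..t + h}"
    using \<open>0 \<le> M\<close> bound by (intro has_integral_bound_real[OF _ _ int, of _ "{}"]) auto
  then show ?thesis
    unfolding diff using h by (simp add: algebra_simps)
qed

lemma power2_norm_add_le:
  fixes a z :: "'a::real_normed_vector"
  assumes "norm a \<le> A" and "norm z \<le> Z"
  shows "(norm (a + z))\<^sup>2 \<le> (norm a)\<^sup>2 + 2 * A * Z + Z\<^sup>2"
proof -
  have "(norm (a + z))\<^sup>2 \<le> (norm a + norm z)\<^sup>2"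
    by (intro power_mono norm_triangle_ineq) simp
  also have "\<dots> = (norm a)\<^sup>2 + 2 * norm a * norm z + (norm z)\<^sup>2"
    by (simp add: power2_sum)
  also have "\<dots> \<le> (norm a)\<^sup>2 + 2 * A * Z + Z\<^sup>2"
    using assms order_trans[OF norm_ge_zero assms(1)] by (intro add_mono mult_mono power_mono) auto
  finally show ?thesis .
qed

lemma mild_sol_propagated_square_le:
  assumes EF: "evolution_family A DA W" and ES: "exp_stable W M \<omega>" and "0 \<le> M" and "0 \<le> \<omega>"
    and t: "0 \<le> t" and ms: "mild_sol W \<Psi> u t x d y" and h: "0 < h" "h \<le> d"
    and K: "\<And>s. s \<in> {t..t + h} \<Longrightarrow> norm (\<Psi> s (y s) (u s)) \<le> K" and "t + h \<le> \<tau>"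
  shows "(norm (blinfun_apply (W \<tau> (t + h)) (y (t + h))))\<^sup>2
           \<le> (norm (blinfun_apply (W \<tau> t) x))\<^sup>2
             + (2 * M\<^sup>2 * norm x * h * K + h\<^sup>2 * M\<^sup>2 * K\<^sup>2) * exp (- (2 * \<omega>) * (\<tau> - (t + h)))"
proof -
  define E where "E = exp (- \<omega> * (\<tau> - (t + h)))"
  have "norm (blinfun_apply (W \<tau> t) x) \<le> M * exp (- \<omega> * (\<tau> - t)) * norm x"
    using exp_stableD[OF ES t] \<open>t + h \<le> \<tau>\<close> h by simp
  also have "\<dots> \<le> M * E * norm x"
    unfolding E_def using h \<open>0 \<le> M\<close> \<open>0 \<le> \<omega>\<close> by (intro mult_right_mono mult_left_mono) (auto simp: mult_left_mono)
  finally have a: "norm (blinfun_apply (W \<tau> t) x) \<le> M * E * norm x" .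
  have EE: "E * E = exp (- (2 * \<omega>) * (\<tau> - (t + h)))"
    unfolding E_def by (simp add: exp_add[symmetric] algebra_simps)
  have "(norm (blinfun_apply (W \<tau> (t + h)) (y (t + h))))\<^sup>2
      = (norm (blinfun_apply (W \<tau> t) x
          + (blinfun_apply (W \<tau> (t + h)) (y (t + h)) - blinfun_apply (W \<tau> t) x)))\<^sup>2"
    by simp
  also have "\<dots> \<le> (norm (blinfun_apply (W \<tau> t) x))\<^sup>2
      + 2 * (M * E * norm x) * (h * M * E * K) + (h * M * E * K)\<^sup>2"
    using mild_sol_deviation_le[OF EF ES \<open>0 \<le> M\<close> \<open>0 \<le> \<omega>\<close> t ms h K \<open>t + h \<le> \<tau>\<close>, folded E_def]
    by (intro power2_norm_add_le a)
  also have "\<dots> = (norm (blinfun_apply (W \<tau> t) x))\<^sup>2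
      + (2 * M\<^sup>2 * norm x * h * K + h\<^sup>2 * M\<^sup>2 * K\<^sup>2) * exp (- (2 * \<omega>) * (\<tau> - (t + h)))"
    unfolding EE[symmetric] by (simp add: power2_eq_square algebra_simps)
  finally show ?thesis .
qed

lemma lyapunov_integral_split:
  assumes EF: "evolution_family A DA W" and ES: "exp_stable W M \<omega>" and "0 < \<omega>" and t: "0 \<le> t"
    and "0 \<le> h"
  shows "lyapunov_integral W t x = integral {t..t + h} (\<lambda>\<tau>. (norm (blinfun_apply (W \<tau> t) x))\<^sup>2)
           + integral {t + h..} (\<lambda>\<tau>. (norm (blinfun_apply (W \<tau> t) x))\<^sup>2)"
proof -
  let ?a = "\<lambda>\<tau>. (norm (blinfun_apply (W \<tau> t) x))\<^sup>2"
  have "?a integrable_on {t..t + h}"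
    by (intro integrable_continuous_interval continuous_on_power continuous_on_norm
        continuous_on_subset[OF evolution_family_continuous_on[OF EF t]]) auto
  moreover have "?a integrable_on {t + h..}"
    using \<open>0 \<le> h\<close> by (intro exp_stable_square_integrable[OF EF ES \<open>0 < \<omega>\<close> t]) auto
  moreover have "negligible ({t..t + h} \<inter> {t + h..})"
    by (rule negligible_subset[of "{t + h}"]) auto
  moreover have "{t..t + h} \<union> {t + h..} = {t..}"
    using \<open>0 \<le> h\<close> by auto
  ultimately show ?thesis
    unfolding lyapunov_integral_def by (metis integral_Un)
qed

lemma lyapunov_integral_increment_le:
  assumes EF: "evolution_family A DA W" and ES: "exp_stable W M \<omega>" and "0 \<le> M" and "0 < \<omega>"
    and t: "0 \<le> t" and ms: "mild_sol W \<Psi> u t x d y" and h: "0 < h" "h \<le> d"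
    and K: "\<And>s. s \<in> {t..t + h} \<Longrightarrow> norm (\<Psi> s (y s) (u s)) \<le> K"
    and initial: "h * ((norm x)\<^sup>2 - \<eta>) \<le> integral {t..t + h} (\<lambda>\<tau>. (norm (blinfun_apply (W \<tau> t) x))\<^sup>2)"
  shows "lyapunov_integral W (t + h) (y (t + h)) - lyapunov_integral W t x
           \<le> h * (- ((norm x)\<^sup>2 - \<eta>) + M\<^sup>2 / \<omega> * norm x * K + h * (M\<^sup>2 * K\<^sup>2 / (2 * \<omega>)))"
proof -
  let ?a = "\<lambda>\<tau>. (norm (blinfun_apply (W \<tau> t) x))\<^sup>2"
  define c where "c = 2 * M\<^sup>2 * norm x * h * K + h\<^sup>2 * M\<^sup>2 * K\<^sup>2"
  let ?g = "\<lambda>\<tau>. ?a \<tau> + c * exp (- (2 * \<omega>) * (\<tau> - (t + h)))"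
  have "((\<lambda>\<tau>. c * exp (- (2 * \<omega>) * (\<tau> - (t + h)))) has_integral c / (2 * \<omega>)) {t + h..}"
    using has_integral_mult_right[OF has_integral_exp_decay[of "2 * \<omega>" "t + h" "t + h"], of c] \<open>0 < \<omega>\<close>
    by simp
  then have g: "(?g has_integral integral {t + h..} ?a + c / (2 * \<omega>)) {t + h..}"
    using h by (intro has_integral_add integrable_integral exp_stable_square_integrable[OF EF ES \<open>0 < \<omega>\<close> t])
      auto
  have "lyapunov_integral W (t + h) (y (t + h)) \<le> integral {t + h..} ?a + c / (2 * \<omega>)"
    unfolding lyapunov_integral_def c_def
    using integral_le[OF exp_stable_square_integrable[OF EF ES \<open>0 < \<omega>\<close> _ order_refl]
        has_integral_integrable[OF g]] integral_unique[OF g] t h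
      mild_sol_propagated_square_le[OF EF ES \<open>0 \<le> M\<close> _ t ms h K] \<open>0 < \<omega>\<close>
    by (simp add: c_def)
  moreover have "c / (2 * \<omega>) = h * (M\<^sup>2 / \<omega> * norm x * K + h * (M\<^sup>2 * K\<^sup>2 / (2 * \<omega>)))"
    using \<open>0 < \<omega>\<close> by (simp add: c_def field_simps power2_eq_square)
  ultimately show ?thesis
    using initial lyapunov_integral_split[OF EF ES \<open>0 < \<omega>\<close> t, of h x] h by (simp add: algebra_simps)
qed

lemma Limsup_at_right_le_approx:
  fixes f L C :: "real \<Rightarrow> real"
  assumes approx: "\<And>\<eta>. \<eta> > 0 \<Longrightarrow> eventually (\<lambda>h. f h \<le> L \<eta> + h * C \<eta>) (at_right 0)"
    and L: "(L \<longlongrightarrow> L0) (at_right 0)"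
  shows "Limsup (at_right 0) (\<lambda>h. ereal (f h)) \<le> ereal L0"
  unfolding Limsup_le_iff
proof (intro allI impI)
  fix c assume "ereal L0 < c"
  then obtain z where z: "L0 < z" "ereal z < c"
    using ereal_dense2 by force
  obtain \<eta> where "\<eta> > 0" "L \<eta> < z"
    using order_tendstoD(2)[OF L z(1)] by (metis eventually_at_right_field dense)
  have "((\<lambda>h. L \<eta> + h * C \<eta>) \<longlongrightarrow> L \<eta> + 0 * C \<eta>) (at_right 0)"
    by (intro tendsto_intros)
  then have "eventually (\<lambda>h. L \<eta> + h * C \<eta> < z) (at_right 0)"
    using \<open>L \<eta> < z\<close> by (intro order_tendstoD(2)) auto
  with approx[OF \<open>\<eta> > 0\<close>] show "eventually (\<lambda>h. c > ereal (f h)) (at_right 0)"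
  proof eventually_elim
    case (elim h)
    then have "ereal (f h) < ereal z"
      by simp
    then show ?case
      using z(2) by (rule order.strict_trans)
  qed
qed

lemma lyapunov_integral_dini_le:
  assumes EF: "evolution_family A DA W" and ES: "exp_stable W M \<omega>" and "0 \<le> M" and "0 < \<omega>"
    and t: "0 \<le> t" and ms: "mild_sol W \<Psi> u t x d y"
    and K: "\<And>\<eta>. \<eta> > 0 \<Longrightarrow> \<exists>\<delta>>0. \<forall>s\<in>{t..t + \<delta>}. norm (\<Psi> s (y s) (u s)) \<le> K + \<eta>"
  shows "Limsup (at_right 0)
           (\<lambda>h. ereal ((lyapunov_integral W (t + h) (y (t + h)) - lyapunov_integral W t x) / h))
         \<le> ereal (- (norm x)\<^sup>2 + M\<^sup>2 / \<omega> * norm x * K)"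
proof (rule Limsup_at_right_le_approx)
  let ?L = "\<lambda>\<eta>. - ((norm x)\<^sup>2 - \<eta>) + M\<^sup>2 / \<omega> * norm x * (K + \<eta>)"
  show "(?L \<longlongrightarrow> - (norm x)\<^sup>2 + M\<^sup>2 / \<omega> * norm x * K) (at_right 0)"
    by (intro tendsto_eq_intros) auto
  fix \<eta> :: real assume "\<eta> > 0"
  obtain \<delta> where \<delta>: "\<delta> > 0" "\<And>s. s \<in> {t..t + \<delta>} \<Longrightarrow> norm (\<Psi> s (y s) (u s)) \<le> K + \<eta>"
    using K[OF \<open>\<eta> > 0\<close>] by blast
  let ?a = "\<lambda>\<tau>. (norm (blinfun_apply (W \<tau> t) x))\<^sup>2"
  have "continuous_on {t..} ?a"
    by (intro continuous_on_power continuous_on_norm evolution_family_continuous_on[OF EF t])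
  then obtain h0 where h0: "h0 > 0" "\<And>h. 0 < h \<Longrightarrow> h \<le> h0 \<Longrightarrow> h * (?a t - \<eta>) \<le> integral {t..t + h} ?a"
    using integral_initial_segment_ge \<open>\<eta> > 0\<close> by blast
  have a_t: "?a t = (norm x)\<^sup>2"
    using evolution_family_id[OF EF t] by simp
  have "eventually (\<lambda>h. 0 < h \<and> h \<le> min d (min \<delta> h0)) (at_right 0)"
    using ms \<delta>(1) h0(1) unfolding eventually_at_right_field mild_sol_def
    by (intro exI[of _ "min d (min \<delta> h0)"]) auto
  then show "eventually (\<lambda>h. (lyapunov_integral W (t + h) (y (t + h)) - lyapunov_integral W t x) / h
      \<le> ?L \<eta> + h * (M\<^sup>2 * (K + \<eta>)\<^sup>2 / (2 * \<omega>))) (at_right 0)"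
  proof eventually_elim
    case (elim h)
    then have "lyapunov_integral W (t + h) (y (t + h)) - lyapunov_integral W t x
        \<le> h * (?L \<eta> + h * (M\<^sup>2 * (K + \<eta>)\<^sup>2 / (2 * \<omega>)))"
      using lyapunov_integral_increment_le[OF EF ES \<open>0 \<le> M\<close> \<open>0 < \<omega>\<close> t ms, of h "K + \<eta>" \<eta>]
        \<delta>(2) h0(2)[of h] a_t
      by simp
    then show ?case
      using elim by (simp add: divide_le_eq mult.commute)
  qed
qed

section \<open>The LISS Lyapunov property\<close>

lemma H2_add_bounded_linear:
  fixes B :: "real \<Rightarrow> 'u::real_normed_vector \<Rightarrow>\<^sub>L 'x::real_normed_vector"
  assumes "bounded (B ` {0..})" and "H2 \<psi>"
  shows "H2 (\<lambda>t x v. blinfun_apply (B t) v + \<psi> t x v)"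
  unfolding H2_def
proof (intro allI impI)
  fix a :: real assume "a > 0"
  with assms(2) obtain b \<rho> where "b > 0" "\<rho> > 0"
    and \<psi>: "\<forall>t x v. t \<ge> 0 \<and> norm x \<le> \<rho> \<and> norm v \<le> \<rho> \<longrightarrow> norm (\<psi> t x v) \<le> a * norm x + b * norm v"
    unfolding H2_def by blast
  obtain C where C: "C > 0" "\<And>t. t \<ge> 0 \<Longrightarrow> norm (B t) \<le> C"
    using assms(1) unfolding bounded_pos by auto
  have "norm (blinfun_apply (B t) v + \<psi> t x v) \<le> a * norm x + (C + b) * norm v"
    if "t \<ge> 0" "norm x \<le> \<rho>" "norm v \<le> \<rho>" for t x v
  proof -
    have "norm (blinfun_apply (B t) v) \<le> C * norm v"
      using norm_blinfun[of "B t" v] mult_right_mono[OF C(2)[OF that(1)] norm_ge_zero]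
      by (rule order_trans)
    moreover note norm_triangle_ineq[of "blinfun_apply (B t) v" "\<psi> t x v"]
    moreover have "norm (\<psi> t x v) \<le> a * norm x + b * norm v"
      using \<psi> that by blast
    ultimately show ?thesis
      by (simp add: distrib_right)
  qed
  then show "\<exists>b>0. \<exists>\<rho>>0. \<forall>t x v. t \<ge> 0 \<and> norm x \<le> \<rho> \<and> norm v \<le> \<rho>
      \<longrightarrow> norm (blinfun_apply (B t) v + \<psi> t x v) \<le> a * norm x + b * norm v"
    using \<open>b > 0\<close> \<open>\<rho> > 0\<close> C(1) by (intro exI[of _ "C + b"] exI[of _ \<rho>]) auto
qed

lemma norm_le_input_norm:
  assumes "pc_input u" and "0 \<le> s"
  shows "norm (u s) \<le> input_norm u"
proof -
  obtain c where "\<forall>v\<in>u ` {0..}. norm v \<le> c"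
    using assms(1) unfolding pc_input_def bounded_iff by blast
  then have "bdd_above ((\<lambda>s. norm (u s)) ` {0..})"
    by (intro bdd_aboveI2[of _ _ c]) auto
  then show ?thesis
    unfolding input_norm_def using assms(2) by (intro cSUP_upper) auto
qed

lemma input_norm_nonneg: "pc_input u \<Longrightarrow> 0 \<le> input_norm u"
  using norm_le_input_norm[of u 0] norm_ge_zero[of "u 0"] by linarith

lemma growth_bound_near_start:
  fixes \<Psi> :: "real \<Rightarrow> 'x::real_normed_vector \<Rightarrow> 'u::real_normed_vector \<Rightarrow> 'x"
  assumes bound: "\<And>s x v. 0 \<le> s \<Longrightarrow> norm x \<le> \<rho> \<Longrightarrow> norm v \<le> \<rho> \<Longrightarrow> norm (\<Psi> s x v) \<le> a * norm x + b * norm v"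
    and "0 \<le> a" and "0 \<le> b" and "0 \<le> t"
    and y: "continuous_on {t..t + d} y" "0 < d" "y t = x" "norm x < \<rho>"
    and u: "\<And>s. 0 \<le> s \<Longrightarrow> norm (u s) \<le> U" "U \<le> \<rho>"
    and "\<eta> > 0"
  shows "\<exists>\<delta>>0. \<forall>s\<in>{t..t + \<delta>}. norm (\<Psi> s (y s) (u s)) \<le> a * norm x + b * U + \<eta>"
proof -
  define e where "e = min (\<eta> / (a + 1)) (\<rho> - norm x)"
  have "e > 0"
    using \<open>0 \<le> a\<close> \<open>\<eta> > 0\<close> \<open>norm x < \<rho>\<close> by (simp add: e_def)
  then obtain \<delta> where "\<delta> > 0" and \<delta>: "\<And>s. s \<in> {t..t + d} \<Longrightarrow> dist s t < \<delta> \<Longrightarrow> dist (y s) (y t) < e"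
    using y(1,2) unfolding continuous_on_iff by (metis atLeastAtMost_iff le_add_same_cancel1 less_imp_le order_refl)
  have "norm (\<Psi> s (y s) (u s)) \<le> a * norm x + b * U + \<eta>" if s: "s \<in> {t..t + min (\<delta> / 2) d}" for s
  proof -
    have "norm (y s - x) < e"
      using \<delta>[of s] s \<open>\<delta> > 0\<close> y(3) by (auto simp: dist_norm dist_real_def)
    then have ys: "norm (y s) \<le> norm x + e"
      using norm_triangle_ineq2[of "y s" x] by linarith
    have "a * e \<le> a * (\<eta> / (a + 1))"
      using \<open>0 \<le> a\<close> by (intro mult_left_mono) (auto simp: e_def)
    also have "\<dots> \<le> \<eta>"
      using \<open>0 \<le> a\<close> \<open>\<eta> > 0\<close> by (simp add: field_simps)
    finally have "a * e \<le> \<eta>" .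
    have us: "norm (u s) \<le> U"
      using u(1)[of s] s \<open>0 \<le> t\<close> by simp
    have "norm (\<Psi> s (y s) (u s)) \<le> a * norm (y s) + b * norm (u s)"
      using s \<open>0 \<le> t\<close> ys us u(2) by (intro bound) (auto simp: e_def)
    also have "\<dots> \<le> a * (norm x + e) + b * U"
      using ys us \<open>0 \<le> a\<close> \<open>0 \<le> b\<close> by (intro add_mono mult_left_mono) auto
    finally show ?thesis
      using \<open>a * e \<le> \<eta>\<close> by (simp add: algebra_simps)
  qed
  then show ?thesis
    using \<open>\<delta> > 0\<close> \<open>0 < d\<close> by (intro exI[of _ "min (\<delta> / 2) d"]) auto
qed

lemma lie_deriv_le_mono:
  "lie_deriv_le W \<Psi> V u t x c \<Longrightarrow> c \<le> c' \<Longrightarrow> lie_deriv_le W \<Psi> V u t x c'"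
  unfolding lie_deriv_le_def by (meson ereal_less_eq(3) order_trans)

text \<open>The gain \<open>\<omega> / (4 * M\<^sup>2)\<close> makes the state-dependent part of the perturbation cost
  at most a quarter of the decay rate \<open>-(norm x)\<^sup>2\<close> of \<open>lyapunov_integral W\<close>.\<close>

lemma lyapunov_integral_lie_deriv_le:
  assumes EF: "evolution_family A DA W" and ES: "exp_stable W M \<omega>" and "0 < M" and "0 < \<omega>"
    and t: "0 \<le> t" and "0 < \<rho>" and "0 \<le> b"
    and bound: "\<And>s x v. 0 \<le> s \<Longrightarrow> norm x \<le> \<rho> \<Longrightarrow> norm v \<le> \<rho> \<Longrightarrow>
       norm (\<Psi> s x v) \<le> \<omega> / (4 * M\<^sup>2) * norm x + b * norm v"
    and x: "norm x \<le> \<rho> / 2" and u: "pc_input u" "input_norm u \<le> \<rho> / 2"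
    and small_input: "4 * M\<^sup>2 / \<omega> * b * input_norm u \<le> norm x"
  shows "lie_deriv_le W \<Psi> (lyapunov_integral W) u t x (- (\<omega> / M\<^sup>2 * lyapunov_integral W t x))"
proof (rule lie_deriv_le_mono)
  show "lie_deriv_le W \<Psi> (lyapunov_integral W) u t x (- (norm x)\<^sup>2 / 2)"
    unfolding lie_deriv_le_def
  proof (intro allI impI)
    fix d y assume ms: "mild_sol W \<Psi> u t x d y"
    define U where "U = input_norm u"
    define K where "K = \<omega> / (4 * M\<^sup>2) * norm x + b * U"
    have y: "continuous_on {t..t + d} y" "0 < d"
      using ms by (auto simp: mild_sol_def)
    have "\<exists>\<delta>>0. \<forall>s\<in>{t..t + \<delta>}. norm (\<Psi> s (y s) (u s)) \<le> K + \<eta>" if "\<eta> > 0" for \<eta>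
      unfolding K_def
      using norm_le_input_norm[OF u(1)] u(2) x \<open>0 < \<rho>\<close> \<open>0 < \<omega>\<close>
      by (intro growth_bound_near_start[OF bound _ \<open>0 \<le> b\<close> t y mild_sol_initial[OF EF t ms] _ _ _ that])
         (auto simp: U_def)
    then have "Limsup (at_right 0)
        (\<lambda>h. ereal ((lyapunov_integral W (t + h) (y (t + h)) - lyapunov_integral W t x) / h))
        \<le> ereal (- (norm x)\<^sup>2 + M\<^sup>2 / \<omega> * norm x * K)"
      using \<open>0 < M\<close> by (intro lyapunov_integral_dini_le[OF EF ES _ \<open>0 < \<omega>\<close> t ms]) auto
    moreover have "- (norm x)\<^sup>2 + M\<^sup>2 / \<omega> * norm x * K \<le> - (norm x)\<^sup>2 / 2"
    proof -
      have "M\<^sup>2 / \<omega> * norm x * K = (norm x)\<^sup>2 / 4 + (4 * M\<^sup>2 / \<omega> * b * U) * norm x / 4"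
        using \<open>0 < M\<close> \<open>0 < \<omega>\<close> by (simp add: K_def field_simps power2_eq_square)
      also have "\<dots> \<le> (norm x)\<^sup>2 / 4 + (norm x)\<^sup>2 / 4"
        using mult_right_mono[OF small_input norm_ge_zero[of x]] by (simp add: U_def power2_eq_square)
      finally show ?thesis
        by linarith
    qed
    ultimately show "Limsup (at_right 0)
        (\<lambda>h. ereal ((lyapunov_integral W (t + h) (y (t + h)) - lyapunov_integral W t x) / h))
        \<le> ereal (- (norm x)\<^sup>2 / 2)"
      by (meson ereal_less_eq(3) order_trans)
  qed
  have "\<omega> / M\<^sup>2 * lyapunov_integral W t x \<le> \<omega> / M\<^sup>2 * (M\<^sup>2 / (2 * \<omega>) * (norm x)\<^sup>2)"
    using lyapunov_integral_le[OF EF ES \<open>0 < \<omega>\<close> t] \<open>0 < \<omega>\<close> by (intro mult_left_mono) auto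
  then show "- (norm x)\<^sup>2 / 2 \<le> - (\<omega> / M\<^sup>2 * lyapunov_integral W t x)"
    using \<open>0 < M\<close> \<open>0 < \<omega>\<close> by simp
qed

lemma classK_scale: "0 < c \<Longrightarrow> classK (\<lambda>r. c * r)"
  unfolding classK_def by (auto intro!: continuous_intros strict_mono_onI)

lemma classKinf_scale_square: "0 < c \<Longrightarrow> classKinf (\<lambda>r. c * r\<^sup>2)"
  unfolding classKinf_def classK_def
  by (auto intro!: continuous_intros strict_mono_onI power_strict_mono
      filterlim_tendsto_pos_mult_at_top[OF tendsto_const _ filterlim_pow_at_top[OF _ filterlim_ident]])

lemma posdef_scale: "0 < c \<Longrightarrow> posdef (\<lambda>r. c * r)"
  unfolding posdef_def by (auto intro!: continuous_intros)

lemma exp_stable_ncLISS_Lyapunov: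
  assumes EF: "evolution_family A DA W" and ES: "exp_stable W M \<omega>" and "0 < M" and "0 < \<omega>"
    and "H2 \<Psi>"
  shows "ncLISS_Lyapunov_impl W \<Psi> (lyapunov_integral W)"
proof -
  have "\<omega> / (4 * M\<^sup>2) > 0"
    using \<open>0 < M\<close> \<open>0 < \<omega>\<close> by simp
  with \<open>H2 \<Psi>\<close> obtain b \<rho> where "b > 0" "\<rho> > 0"
    and bound: "\<forall>s x v. s \<ge> 0 \<and> norm x \<le> \<rho> \<and> norm v \<le> \<rho> \<longrightarrow>
       norm (\<Psi> s x v) \<le> \<omega> / (4 * M\<^sup>2) * norm x + b * norm v"
    unfolding H2_def by blast
  define k where "k = 4 * M\<^sup>2 / \<omega> * b + 1"
  have "k > 0"
    unfolding k_def using \<open>b > 0\<close> \<open>0 < \<omega>\<close> by (intro add_nonneg_pos) auto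
  have lie: "lie_deriv_le W \<Psi> (lyapunov_integral W) u t x (- (\<omega> / M\<^sup>2 * lyapunov_integral W t x))"
    if "0 \<le> t" "norm x \<le> \<rho> / 2" "pc_input u" "input_norm u \<le> \<rho> / 2" "k * input_norm u \<le> norm x"
    for t x u
  proof -
    have "4 * M\<^sup>2 / \<omega> * b * input_norm u \<le> k * input_norm u"
      using input_norm_nonneg[OF that(3)] by (intro mult_right_mono) (auto simp: k_def)
    then show ?thesis
      using that bound \<open>b > 0\<close> \<open>\<rho> > 0\<close>
      by (intro lyapunov_integral_lie_deriv_le[OF EF ES \<open>0 < M\<close> \<open>0 < \<omega>\<close>, where \<rho> = \<rho> and b = b])
         auto
  qed
  show ?thesis
    unfolding ncLISS_Lyapunov_impl_def
  proof (rule exI[of _ UNIV], rule exI[of _ "\<lambda>r. M\<^sup>2 / (2 * \<omega>) * r\<^sup>2"], rule exI[of _ "\<lambda>r. k * r"],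
      rule exI[of _ "\<lambda>r. \<omega> / M\<^sup>2 * r"], rule exI[of _ "\<rho> / 2"], rule exI[of _ "\<rho> / 2"], intro conjI)
    show "\<forall>t\<ge>0. lyapunov_integral W t 0 = 0"
      by (simp add: lyapunov_integral_def)
    show "classKinf (\<lambda>r. M\<^sup>2 / (2 * \<omega>) * r\<^sup>2)" and "posdef (\<lambda>r. \<omega> / M\<^sup>2 * r)"
      using \<open>0 < M\<close> \<open>0 < \<omega>\<close> by (intro classKinf_scale_square posdef_scale; simp)+
  qed (use lie lyapunov_integral_le[OF EF ES \<open>0 < \<omega>\<close>] \<open>\<rho> > 0\<close> \<open>k > 0\<close> \<open>0 < M\<close> \<open>0 < \<omega>\<close> in
      \<open>auto intro: lyapunov_integral_continuous[OF EF ES] lyapunov_integral_nonneg[OF EF ES]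
        lyapunov_integral_pos[OF EF ES] classK_scale\<close>)
qed

theorem mainTheorem12:
  fixes A :: "real \<Rightarrow> 'x::banach \<Rightarrow> 'x" and DA :: "real \<Rightarrow> 'x set"
    and W :: "real \<Rightarrow> real \<Rightarrow> 'x \<Rightarrow>\<^sub>L 'x"
    and B :: "real \<Rightarrow> 'u::banach \<Rightarrow>\<^sub>L 'x"
    and \<psi> :: "real \<Rightarrow> 'x \<Rightarrow> 'u \<Rightarrow> 'x"
  assumes "evolution_family A DA W"
    and "continuous_on {0..} B" and "bounded (B ` {0..})"
    and "H1 (\<lambda>t x v. blinfun_apply (B t) v + \<psi> t x v)"
    and "H2 \<psi>"
    and "zero_UGAS W"
  shows "ncLISS_Lyapunov_impl W (\<lambda>t x v. blinfun_apply (B t) v + \<psi> t x v)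
           (\<lambda>t x. integral {t..} (\<lambda>\<tau>. (norm (blinfun_apply (W \<tau> t) x))\<^sup>2))"
proof -
  \<comment> \<open>Continuity of \<open>B\<close> and (H1) only guarantee that mild solutions exist; the Dini
    condition quantifies over all mild solutions.\<close>
  obtain M \<omega> where "M \<ge> 1" and "\<omega> > 0" and ES: "exp_stable W M \<omega>"
    using zero_UGAS_imp_exp_stable[OF assms(1,6)] .
  moreover have "H2 (\<lambda>t x v. blinfun_apply (B t) v + \<psi> t x v)"
    using H2_add_bounded_linear[OF assms(3,5)] .
  ultimately show ?thesis
    unfolding lyapunov_integral_def[symmetric] by (intro exp_stable_ncLISS_Lyapunov[OF assms(1) ES]) auto
qed

end
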